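(* Let $r\le s$, $M$ the space of complex $r\times s$ matrices, and $\lambda$ a pre-partition of length at most $r$ with associated orbit $O_\lambda\subset M_\infty$. If $\lambda$ is a partition, then $O_\lambda$ is a cylinder of $M_\infty$. More generally, if $r-k$ is the number of infinite terms of $\lambda$, then $O_\lambda$ is a cylinder of $(D_k)_\infty$, where $D_k\subset M$ is the variety of matrices of rank at most $k$.
   Context: For a variety $X$, a constructible subset is a finite union of locally closed subsets, and a cylinder in the arc space $X_\infty$ is a set $\psi_n^{-1}(C)$ with $C\subset X_n$ constructible, where $\psi_n:X_\infty\to X_n$ is the truncation to the $n$-th jet scheme. The $\mathbb{C}$-points of $M_\infty$ are $r\times s$ matrices over $\mathbb{C}[[t]]$, acted on by $G_\infty$ for $G=GL_r\times GL_s$ via $(g,h)\cdot A=gAh^{-1}$. A pre-partition of length at most $r$ is $\lambda_1\ge\dots\ge\lambda_r\ge0$ in $\mathbb N\cup\{\infty\}$ ($\infty>n$); a partition if all terms finite. $\delta_\lambda$ is the $r\times s$ matrix with first $s-r$ columns zero and last $r$ columns $\mathrm{diag}(t^{\lambda_1},\dots,t^{\lambda_r})$ ($t^\infty=0$), and $O_\lambda=G_\infty\cdot\delta_\lambda$. $D_k$ is defined by the $(k+1)\times(k+1)$ minors. *)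

theory Defs
  imports "HOL-Computational_Algebra.Formal_Power_Series" "HOL-Library.Extended_Nat"
          "HOL-Combinatorics.Permutations"
begin

text \<open>An r x s matrix with entries in a ring is modelled as a function
  nat => nat => 'a which vanishes outside the index box i < r, j < s.\<close>

definition mats :: "nat \<Rightarrow> nat \<Rightarrow> (nat \<Rightarrow> nat \<Rightarrow> 'a::zero) set" where
  "mats r s = {A. \<forall>i j. (r \<le> i \<or> s \<le> j) \<longrightarrow> A i j = 0}"

text \<open>C-points of the arc space M_infinity: r x s matrices over C[[t]].\<close>
abbreviation arcs :: "nat \<Rightarrow> nat \<Rightarrow> (nat \<Rightarrow> nat \<Rightarrow> complex fps) set" where
  "arcs r s \<equiv> mats r s"

definition mat_mult :: "nat \<Rightarrow> (nat \<Rightarrow> nat \<Rightarrow> 'a::comm_ring_1) \<Rightarrow> (nat \<Rightarrow> nat \<Rightarrow> 'a) \<Rightarrow> nat \<Rightarrow> nat \<Rightarrow> 'a" where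
  "mat_mult m A B = (\<lambda>i j. \<Sum>l<m. A i l * B l j)"

definition mat_one :: "nat \<Rightarrow> nat \<Rightarrow> nat \<Rightarrow> 'a::comm_ring_1" where
  "mat_one n = (\<lambda>i j. if i = j \<and> i < n then 1 else 0)"

definition GL_arc :: "nat \<Rightarrow> (nat \<Rightarrow> nat \<Rightarrow> complex fps) set" where
  "GL_arc n = {g \<in> mats n n. \<exists>h \<in> mats n n. mat_mult n g h = mat_one n \<and> mat_mult n h g = mat_one n}"

definition mat_inv_arc :: "nat \<Rightarrow> (nat \<Rightarrow> nat \<Rightarrow> complex fps) \<Rightarrow> nat \<Rightarrow> nat \<Rightarrow> complex fps" where
  "mat_inv_arc n g = (SOME h. h \<in> mats n n \<and> mat_mult n g h = mat_one n \<and> mat_mult n h g = mat_one n)"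

definition act :: "nat \<Rightarrow> nat \<Rightarrow> (nat \<Rightarrow> nat \<Rightarrow> complex fps) \<Rightarrow> (nat \<Rightarrow> nat \<Rightarrow> complex fps)
     \<Rightarrow> (nat \<Rightarrow> nat \<Rightarrow> complex fps) \<Rightarrow> nat \<Rightarrow> nat \<Rightarrow> complex fps" where
  "act r s g h A = mat_mult s (mat_mult r g A) (mat_inv_arc s h)"

text \<open>Pre-partitions of length at most r: lam 0 >= ... >= lam (r-1) >= 0 in N u {infinity}
  (values at indices >= r are irrelevant).\<close>
definition pre_partition :: "nat \<Rightarrow> (nat \<Rightarrow> enat) \<Rightarrow> bool" where
  "pre_partition r lam \<longleftrightarrow> (\<forall>i j. i \<le> j \<longrightarrow> j < r \<longrightarrow> lam j \<le> lam i)"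

definition is_partition :: "nat \<Rightarrow> (nat \<Rightarrow> enat) \<Rightarrow> bool" where
  "is_partition r lam \<longleftrightarrow> pre_partition r lam \<and> (\<forall>i<r. lam i \<noteq> \<infinity>)"

definition t_pow :: "enat \<Rightarrow> complex fps" where
  "t_pow e = (case e of enat m \<Rightarrow> fps_X ^ m | \<infinity> \<Rightarrow> 0)"

definition delta :: "nat \<Rightarrow> nat \<Rightarrow> (nat \<Rightarrow> enat) \<Rightarrow> nat \<Rightarrow> nat \<Rightarrow> complex fps" where
  "delta r s lam = (\<lambda>i j. if i < r \<and> j = (s - r) + i then t_pow (lam i) else 0)"

definition orbit :: "nat \<Rightarrow> nat \<Rightarrow> (nat \<Rightarrow> enat) \<Rightarrow> (nat \<Rightarrow> nat \<Rightarrow> complex fps) set" where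
  "orbit r s lam = {act r s g h (delta r s lam) | g h. g \<in> GL_arc r \<and> h \<in> GL_arc s}"

definition minor :: "(nat \<Rightarrow> nat \<Rightarrow> 'a::comm_ring_1) \<Rightarrow> nat list \<Rightarrow> nat list \<Rightarrow> 'a" where
  "minor A is js = (\<Sum>p | p permutes {..<length is}.
      of_int (sign p) * (\<Prod>l<length is. A (is ! l) (js ! p l)))"

definition minor_indices :: "nat \<Rightarrow> nat \<Rightarrow> nat \<Rightarrow> (nat list \<times> nat list) set" where
  "minor_indices r s m = {(is, js). length is = m \<and> length js = m \<and>
      sorted_wrt (<) is \<and> sorted_wrt (<) js \<and> set is \<subseteq> {..<r} \<and> set js \<subseteq> {..<s}}"

definition Dk_arcs :: "nat \<Rightarrow> nat \<Rightarrow> nat \<Rightarrow> (nat \<Rightarrow> nat \<Rightarrow> complex fps) set" where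
  "Dk_arcs r s k = {A \<in> arcs r s. \<forall>(is, js) \<in> minor_indices r s (Suc k). minor A is js = 0}"

text \<open>C-points of M_n (n-jets): matrices over C[t]/(t^(n+1)), stored via coefficients
  x (i,j,d), d <= n; i.e. points of the affine space C^(r*s*(n+1)).\<close>
definition jets :: "nat \<Rightarrow> nat \<Rightarrow> nat \<Rightarrow> (nat \<times> nat \<times> nat \<Rightarrow> complex) set" where
  "jets r s n = {x. \<forall>i j d. (r \<le> i \<or> s \<le> j \<or> n < d) \<longrightarrow> x (i, j, d) = 0}"

definition trunc :: "nat \<Rightarrow> (nat \<Rightarrow> nat \<Rightarrow> complex fps) \<Rightarrow> nat \<times> nat \<times> nat \<Rightarrow> complex" where
  "trunc n A = (\<lambda>(i, j, d). if d \<le> n then fps_nth (A i j) d else 0)"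

definition jet_mat :: "(nat \<times> nat \<times> nat \<Rightarrow> complex) \<Rightarrow> nat \<Rightarrow> nat \<Rightarrow> complex fps" where
  "jet_mat x = (\<lambda>i j. Abs_fps (\<lambda>d. x (i, j, d)))"

definition Dk_jets :: "nat \<Rightarrow> nat \<Rightarrow> nat \<Rightarrow> nat \<Rightarrow> (nat \<times> nat \<times> nat \<Rightarrow> complex) set" where
  "Dk_jets r s k n = {x \<in> jets r s n. \<forall>(is, js) \<in> minor_indices r s (Suc k).
       \<forall>d\<le>n. fps_nth (minor (jet_mat x) is js) d = 0}"

inductive_set poly_funs :: "(('v \<Rightarrow> complex) \<Rightarrow> complex) set" where
  const: "(\<lambda>_. c) \<in> poly_funs"
| var: "(\<lambda>x. x v) \<in> poly_funs"
| add: "f \<in> poly_funs \<Longrightarrow> g \<in> poly_funs \<Longrightarrow> (\<lambda>x. f x + g x) \<in> poly_funs"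
| mult: "f \<in> poly_funs \<Longrightarrow> g \<in> poly_funs \<Longrightarrow> (\<lambda>x. f x * g x) \<in> poly_funs"

definition zariski_closed_in :: "('v \<Rightarrow> complex) set \<Rightarrow> ('v \<Rightarrow> complex) set \<Rightarrow> bool" where
  "zariski_closed_in X Z \<longleftrightarrow> (\<exists>F \<subseteq> poly_funs. Z = {x \<in> X. \<forall>f\<in>F. f x = 0})"

definition zariski_open_in :: "('v \<Rightarrow> complex) set \<Rightarrow> ('v \<Rightarrow> complex) set \<Rightarrow> bool" where
  "zariski_open_in X U \<longleftrightarrow> zariski_closed_in X (X - U)"

definition locally_closed_in :: "('v \<Rightarrow> complex) set \<Rightarrow> ('v \<Rightarrow> complex) set \<Rightarrow> bool" where
  "locally_closed_in X L \<longleftrightarrow> (\<exists>U Z. zariski_open_in X U \<and> U \<subseteq> X \<and> zariski_closed_in X Z \<and> L = U \<inter> Z)"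

definition constructible_in :: "('v \<Rightarrow> complex) set \<Rightarrow> ('v \<Rightarrow> complex) set \<Rightarrow> bool" where
  "constructible_in X C \<longleftrightarrow> (\<exists>\<L>. finite \<L> \<and> (\<forall>L\<in>\<L>. locally_closed_in X L) \<and> C = \<Union>\<L>)"

definition cylinder_M :: "nat \<Rightarrow> nat \<Rightarrow> (nat \<Rightarrow> nat \<Rightarrow> complex fps) set \<Rightarrow> bool" where
  "cylinder_M r s S \<longleftrightarrow> (\<exists>n C. constructible_in (jets r s n) C \<and>
      S = {A \<in> arcs r s. trunc n A \<in> C})"

text \<open>Cylinders of (D_k)_infinity: psi_n^{-1}(C) \<inter> (D_k)_infinity, with C a constructible
  subset of (D_k)_n (constructible in the closed subset (D_k)_n of M_n).\<close>
definition cylinder_Dk :: "nat \<Rightarrow> nat \<Rightarrow> nat \<Rightarrow> (nat \<Rightarrow> nat \<Rightarrow> complex fps) set \<Rightarrow> bool" where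
  "cylinder_Dk r s k S \<longleftrightarrow> (\<exists>n C. constructible_in (jets r s n) C \<and> C \<subseteq> Dk_jets r s k n \<and>
      S = {A \<in> Dk_arcs r s k. trunc n A \<in> C})"

end

theory Submission
  imports Defs "Jordan_Normal_Form.Determinant"
begin

text \<open>Over \<open>\<complex>[[t]]\<close> every arc is equivalent to a diagonal arc \<open>\<delta>\<^sub>\<nu>\<close> (Smith normal form), and
  the orders of the ideals of \<open>m \<times> m\<close> minors are invariant under \<open>G\<^sub>\<infinity>\<close>; for \<open>\<delta>\<^sub>\<nu>\<close> the
  order is the sum of the \<open>m\<close> smallest parts of \<open>\<nu>\<close>. Hence an arc of \<open>(D\<^sub>k)\<^sub>\<infinity>\<close> lies in
  \<open>O\<^sub>\<lambda>\<close> iff these orders for \<open>m \<le> k\<close> are those of \<open>\<delta>\<^sub>\<lambda>\<close>: the last \<open>k\<close> parts are recovered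
  by differences, and vanishing of the \<open>(k+1)\<close>-minors makes the others infinite. As these
  orders are finite, they are decided by the jet of order \<open>\<lambda>\<^sub>r + \<dots> + \<lambda>\<^sub>r\<^sub>-\<^sub>k\<^sub>+\<^sub>1\<close>, where the
  conditions are locally closed; a partition is the case \<open>k = r\<close>, where \<open>D\<^sub>r = M\<close>.\<close>

lemma mat_mult_assoc:
  "mat_mult n (mat_mult m A B) C = mat_mult m A (mat_mult n B C)"
  unfolding mat_mult_def
  by (intro ext) (simp add: sum_distrib_left sum_distrib_right mult.assoc sum.swap[of _ "{..<n}"])

lemma mat_mult_mats: "A \<in> mats r m \<Longrightarrow> B \<in> mats m s \<Longrightarrow> mat_mult m A B \<in> mats r s"
  unfolding mats_def mat_mult_def by auto

lemma mat_one_mats: "mat_one n \<in> mats n n"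
  unfolding mats_def mat_one_def by auto

lemma mat_one_left: assumes "A \<in> mats n s" shows "mat_mult n (mat_one n) A = A"
proof (intro ext)
  fix i j
  have "mat_mult n (mat_one n) A i j = (\<Sum>l<n. if i = l then A l j else 0)"
    unfolding mat_mult_def mat_one_def by (intro sum.cong) auto
  then show "mat_mult n (mat_one n) A i j = A i j" using assms unfolding mats_def by simp
qed

lemma mat_one_right: assumes "A \<in> mats r n" shows "mat_mult n A (mat_one n) = A"
proof (intro ext)
  fix i j
  have "mat_mult n A (mat_one n) i j = (\<Sum>l<n. if l = j then A i l else 0)"
    unfolding mat_mult_def mat_one_def by (intro sum.cong) auto
  then show "mat_mult n A (mat_one n) i j = A i j" using assms unfolding mats_def by simp
qed

lemma GL_arc_mats: "g \<in> GL_arc n \<Longrightarrow> g \<in> mats n n"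
  unfolding GL_arc_def by auto

lemma GL_arcI:
  "g \<in> mats n n \<Longrightarrow> h \<in> mats n n \<Longrightarrow> mat_mult n g h = mat_one n \<Longrightarrow> mat_mult n h g = mat_one n
    \<Longrightarrow> g \<in> GL_arc n"
  unfolding GL_arc_def by blast

lemma mat_one_GL_arc: "mat_one n \<in> GL_arc n"
  by (rule GL_arcI[OF mat_one_mats mat_one_mats]) (simp_all add: mat_one_left[OF mat_one_mats])

lemma mat_inv_arc:
  assumes "g \<in> GL_arc n"
  shows "mat_inv_arc n g \<in> mats n n" "mat_mult n g (mat_inv_arc n g) = mat_one n"
    "mat_mult n (mat_inv_arc n g) g = mat_one n"
proof -
  have "\<exists>h. h \<in> mats n n \<and> mat_mult n g h = mat_one n \<and> mat_mult n h g = mat_one n"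
    using assms unfolding GL_arc_def by auto
  from someI_ex[OF this] show "mat_inv_arc n g \<in> mats n n" "mat_mult n g (mat_inv_arc n g) = mat_one n"
    "mat_mult n (mat_inv_arc n g) g = mat_one n" unfolding mat_inv_arc_def by auto
qed

lemma mat_inv_arc_GL_arc: "g \<in> GL_arc n \<Longrightarrow> mat_inv_arc n g \<in> GL_arc n"
  using mat_inv_arc GL_arc_mats by (blast intro: GL_arcI)

lemma mat_inv_arc_inv_arc: assumes "g \<in> GL_arc n" shows "mat_inv_arc n (mat_inv_arc n g) = g"
proof -
  let ?h = "mat_inv_arc n g" and ?hh = "mat_inv_arc n (mat_inv_arc n g)"
  have h: "?h \<in> GL_arc n" using mat_inv_arc_GL_arc[OF assms] .
  have "?hh = mat_mult n ?hh (mat_mult n ?h g)"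
    using mat_inv_arc[OF assms] mat_one_right[OF mat_inv_arc(1)[OF h]] by simp
  also have "\<dots> = mat_mult n (mat_mult n ?hh ?h) g" by (simp add: mat_mult_assoc)
  also have "\<dots> = g" using mat_inv_arc(3)[OF h] mat_one_left[OF GL_arc_mats[OF assms]] by simp
  finally show ?thesis .
qed

lemma GL_arc_mult:
  assumes g: "g \<in> GL_arc n" and h: "h \<in> GL_arc n"
  shows "mat_mult n g h \<in> GL_arc n"
proof (rule GL_arcI)
  let ?g' = "mat_inv_arc n g" and ?h' = "mat_inv_arc n h"
  note gi = mat_inv_arc[OF g] and hi = mat_inv_arc[OF h] and m = GL_arc_mats[OF g] GL_arc_mats[OF h]
  have "mat_mult n (mat_mult n g h) (mat_mult n ?h' ?g') = mat_mult n g (mat_mult n (mat_mult n h ?h') ?g')"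
    by (simp add: mat_mult_assoc)
  then show "mat_mult n (mat_mult n g h) (mat_mult n ?h' ?g') = mat_one n"
    using gi hi by (simp add: mat_one_left)
  have "mat_mult n (mat_mult n ?h' ?g') (mat_mult n g h) = mat_mult n ?h' (mat_mult n (mat_mult n ?g' g) h)"
    by (simp add: mat_mult_assoc)
  then show "mat_mult n (mat_mult n ?h' ?g') (mat_mult n g h) = mat_one n"
    using gi hi m by (simp add: mat_one_left)
qed (use mat_inv_arc(1) g h GL_arc_mats mat_mult_mats in blast)+

definition arc_equiv ::
  "nat \<Rightarrow> nat \<Rightarrow> (nat \<Rightarrow> nat \<Rightarrow> complex fps) \<Rightarrow> (nat \<Rightarrow> nat \<Rightarrow> complex fps) \<Rightarrow> bool" where
  "arc_equiv r s A B \<longleftrightarrow> (\<exists>g\<in>GL_arc r. \<exists>k\<in>GL_arc s. A = mat_mult s (mat_mult r g B) k)"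

lemma orbit_eq_arc_equiv: "orbit r s lam = {A. arc_equiv r s A (delta r s lam)}"
proof safe
  fix A assume "A \<in> orbit r s lam"
  then show "arc_equiv r s A (delta r s lam)"
    unfolding orbit_def act_def arc_equiv_def using mat_inv_arc_GL_arc by blast
next
  fix A assume "arc_equiv r s A (delta r s lam)"
  then obtain g k where g: "g \<in> GL_arc r" and k: "k \<in> GL_arc s"
    and A: "A = mat_mult s (mat_mult r g (delta r s lam)) k"
    unfolding arc_equiv_def by blast
  have "A = act r s g (mat_inv_arc s k) (delta r s lam)"
    unfolding act_def A mat_inv_arc_inv_arc[OF k] ..
  then show "A \<in> orbit r s lam"
    unfolding orbit_def using g mat_inv_arc_GL_arc[OF k] by blast
qed

lemma arc_equiv_refl: assumes "A \<in> mats r s" shows "arc_equiv r s A A"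
  unfolding arc_equiv_def using mat_one_left[OF assms] mat_one_right[OF assms] mat_one_GL_arc by metis

lemma arc_equiv_trans:
  assumes "arc_equiv r s A B" "arc_equiv r s B C" shows "arc_equiv r s A C"
proof -
  obtain g k g' k' where "g \<in> GL_arc r" "k \<in> GL_arc s" "A = mat_mult s (mat_mult r g B) k"
    "g' \<in> GL_arc r" "k' \<in> GL_arc s" "B = mat_mult s (mat_mult r g' C) k'"
    using assms unfolding arc_equiv_def by blast
  then have "A = mat_mult s (mat_mult r (mat_mult r g g') C) (mat_mult s k' k)"
    by (simp add: mat_mult_assoc)
  then show ?thesis unfolding arc_equiv_def
    using GL_arc_mult \<open>g \<in> GL_arc r\<close> \<open>g' \<in> GL_arc r\<close> \<open>k \<in> GL_arc s\<close> \<open>k' \<in> GL_arc s\<close> by blast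
qed

lemma arc_equiv_sym:
  assumes "arc_equiv r s A B" "B \<in> mats r s" shows "arc_equiv r s B A"
proof -
  obtain g k where g: "g \<in> GL_arc r" and k: "k \<in> GL_arc s" and A: "A = mat_mult s (mat_mult r g B) k"
    using assms unfolding arc_equiv_def by blast
  let ?g' = "mat_inv_arc r g" and ?k' = "mat_inv_arc s k"
  have "mat_mult s (mat_mult r ?g' A) ?k' = mat_mult s (mat_mult r (mat_mult r ?g' g) B) (mat_mult s k ?k')"
    unfolding A by (simp add: mat_mult_assoc)
  also have "\<dots> = B" using mat_inv_arc[OF g] mat_inv_arc[OF k] assms(2)
    by (simp add: mat_one_left mat_one_right)
  finally have "B = mat_mult s (mat_mult r ?g' A) ?k'" ..
  then show ?thesis unfolding arc_equiv_def using mat_inv_arc_GL_arc[OF g] mat_inv_arc_GL_arc[OF k] by blast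
qed

lemma arc_equiv_mats: "arc_equiv r s A B \<Longrightarrow> B \<in> mats r s \<Longrightarrow> A \<in> mats r s"
  unfolding arc_equiv_def by (blast intro: mat_mult_mats GL_arc_mats)

lemma delta_mats: "r \<le> s \<Longrightarrow> delta r s lam \<in> mats r s"
  unfolding delta_def mats_def by auto

definition mat_transp :: "(nat \<Rightarrow> nat \<Rightarrow> 'a) \<Rightarrow> nat \<Rightarrow> nat \<Rightarrow> 'a" where
  "mat_transp A = (\<lambda>i j. A j i)"

lemma mat_transp_mat_transp [simp]: "mat_transp (mat_transp A) = A"
  unfolding mat_transp_def by simp

lemma mat_transp_mat_mult: "mat_transp (mat_mult n A B) = mat_mult n (mat_transp B) (mat_transp A)"
  unfolding mat_transp_def mat_mult_def by (simp add: mult.commute)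

lemma mat_transp_mat_one [simp]: "mat_transp (mat_one n) = mat_one n"
  unfolding mat_transp_def mat_one_def by (intro ext) auto

lemma mat_transp_mats: "A \<in> mats r s \<Longrightarrow> mat_transp A \<in> mats s r"
  unfolding mats_def mat_transp_def by auto

lemma mat_transp_GL_arc:
  assumes "g \<in> GL_arc n" shows "mat_transp g \<in> GL_arc n"
proof (rule GL_arcI)
  let ?h = "mat_inv_arc n g"
  note h = mat_inv_arc[OF assms]
  show "mat_mult n (mat_transp g) (mat_transp ?h) = mat_one n"
    using h(3) by (metis mat_transp_mat_mult mat_transp_mat_one)
  show "mat_mult n (mat_transp ?h) (mat_transp g) = mat_one n"
    using h(2) by (metis mat_transp_mat_mult mat_transp_mat_one)
qed (use mat_transp_mats GL_arc_mats[OF assms] mat_inv_arc(1)[OF assms] in blast)+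

section \<open>Minors\<close>

lemma minor_eq_det:
  assumes "length js = length is"
  shows "minor A is js = det (mat (length is) (length is) (\<lambda>(i,j). A (is ! i) (js ! j)))"
  unfolding det_def minor_def
  by (auto simp: atLeast0LessThan permutes_in_image intro!: sum.cong arg_cong2[where f="(*)"] prod.cong)

lemma minor_mat_transp:
  assumes "length js = length is"
  shows "minor A is js = minor (mat_transp A) js is"
proof -
  let ?M = "mat (length is) (length is) (\<lambda>(i,j). A (is ! i) (js ! j))"
  have "transpose_mat ?M = mat (length js) (length js) (\<lambda>(i,j). mat_transp A (js ! i) (is ! j))"
    using assms by (intro eq_matI) (auto simp: mat_transp_def)
  then show ?thesis using det_transpose[of ?M "length is"] assms
    by (simp add: minor_eq_det[OF assms] minor_eq_det[OF assms[symmetric]])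
qed

lemma minor_single: "minor A [i] [j] = A i j"
proof -
  have "{p. p permutes {..<Suc 0}} = {id}"
    by (auto simp: lessThan_Suc)
  then show ?thesis unfolding minor_def by (simp add: sign_id)
qed

lemma minor_repeated_row:
  assumes "\<not> distinct is" "length js = length is"
  shows "minor A is js = 0"
proof -
  obtain a b where ab: "a < length is" "b < length is" "a \<noteq> b" "is ! a = is ! b"
    using assms(1) by (auto simp: distinct_conv_nth)
  let ?n = "length is"
  let ?M = "mat ?n ?n (\<lambda>(i,j). A (is ! i) (js ! j))"
  have "row ?M a = row ?M b" using ab by (intro eq_vecI) auto
  then have "det ?M = 0" by (intro det_identical_rows[of _ ?n a b]) (use ab in auto)
  then show ?thesis using minor_eq_det[OF assms(2), of A] by simp
qed

lemma minor_repeated_col: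
  assumes "\<not> distinct js" "length js = length is"
  shows "minor A is js = 0"
proof -
  have "minor (mat_transp A) js is = 0" by (rule minor_repeated_row) (use assms in auto)
  then show ?thesis using minor_mat_transp[OF assms(2), of A] by simp
qed

lemma minor_permute_rows:
  assumes p: "p permutes {..<length is}" and "length js = length is"
  shows "minor A (permute_list p is) js = of_int (sign p) * minor A is js"
proof -
  let ?n = "length is"
  let ?M = "mat ?n ?n (\<lambda>(i,j). A (is ! i) (js ! j))"
  have p': "p permutes {0..<?n}" using p by (simp add: atLeast0LessThan)
  have "mat ?n ?n (\<lambda>(i,j). ?M $$ (p i, j)) = mat ?n ?n (\<lambda>(i,j). A (permute_list p is ! i) (js ! j))"
    using permutes_in_image[OF p] by (intro eq_matI) (auto simp: permute_list_nth[OF p])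
  then show ?thesis using det_permute_rows[OF _ p', of ?M]
    by (simp add: minor_eq_det[OF assms(2)] minor_eq_det assms(2))
qed

lemma minor_permute_cols:
  assumes p: "p permutes {..<length js}" and "length js = length is"
  shows "minor A is (permute_list p js) = of_int (sign p) * minor A is js"
proof -
  have "minor (mat_transp A) (permute_list p js) is = of_int (sign p) * minor (mat_transp A) js is"
    by (rule minor_permute_rows[OF p]) (use assms in simp)
  then show ?thesis using minor_mat_transp[of js "is" A] minor_mat_transp[of "permute_list p js" "is" A] assms(2)
    by simp
qed

text \<open>Any minor is zero or, up to sign, one with strictly increasing index lists.\<close>

lemma minors_vanish_if_sorted_minors_vanish:
  assumes h: "\<forall>(is, js) \<in> minor_indices r s m. minor A is js = 0"
    and l: "length is = m" "length js = m" "set is \<subseteq> {..<r}" "set js \<subseteq> {..<s}"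
  shows "minor A is js = 0"
proof (cases "distinct is \<and> distinct js")
  case False
  then show ?thesis using minor_repeated_row minor_repeated_col l by auto
next
  case True
  let ?i = "sort is" and ?j = "sort js"
  have "(?i, ?j) \<in> minor_indices r s m"
    using True l unfolding minor_indices_def by (auto simp: strict_sorted_iff)
  then have "minor A ?i ?j = 0" using h by auto
  moreover obtain p where p: "p permutes {..<length ?i}" "permute_list p ?i = is"
    by (rule mset_eq_permutation[of "is" ?i]) simp
  moreover obtain q where q: "q permutes {..<length ?j}" "permute_list q ?j = js"
    by (rule mset_eq_permutation[of js ?j]) simp
  ultimately show ?thesis
    using minor_permute_rows[OF p(1), of ?j A] minor_permute_cols[OF q(1), of "is" A] l by simp
qed

lemma minor_mat_mult_left:
  assumes "length is = m"
  shows "minor (mat_mult r g A) is js =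
    (\<Sum>f\<in>Pi\<^sub>E {..<m} (\<lambda>_. {..<r}). (\<Prod>l<m. g (is ! l) (f l)) * minor A (map f [0..<m]) js)"
proof -
  have "minor (mat_mult r g A) is js =
     (\<Sum>p | p permutes {..<m}. of_int (sign p) * (\<Prod>l<m. \<Sum>q<r. g (is ! l) q * A q (js ! p l)))"
    unfolding minor_def mat_mult_def assms ..
  also have "\<dots> = (\<Sum>p | p permutes {..<m}. of_int (sign p) *
      (\<Sum>f\<in>Pi\<^sub>E {..<m} (\<lambda>_. {..<r}). \<Prod>l<m. g (is ! l) (f l) * A (f l) (js ! p l)))"
    by (subst prod_sum_PiE) auto
  also have "\<dots> = (\<Sum>p | p permutes {..<m}. \<Sum>f\<in>Pi\<^sub>E {..<m} (\<lambda>_. {..<r}).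
      (\<Prod>l<m. g (is ! l) (f l)) * (of_int (sign p) * (\<Prod>l<m. A (f l) (js ! p l))))"
    by (simp add: sum_distrib_left prod.distrib mult_ac)
  also have "\<dots> = (\<Sum>f\<in>Pi\<^sub>E {..<m} (\<lambda>_. {..<r}). (\<Prod>l<m. g (is ! l) (f l)) *
      (\<Sum>p | p permutes {..<m}. of_int (sign p) * (\<Prod>l<m. A (f l) (js ! p l))))"
    by (subst sum.swap) (simp add: sum_distrib_left)
  also have "\<dots> = (\<Sum>f\<in>Pi\<^sub>E {..<m} (\<lambda>_. {..<r}). (\<Prod>l<m. g (is ! l) (f l)) * minor A (map f [0..<m]) js)"
    unfolding minor_def by (intro sum.cong refl arg_cong2[where f="(*)"] prod.cong) auto
  finally show ?thesis .
qed

lemma fps_X_power_dvd_iff: "fps_X ^ m dvd (f :: 'a::field fps) \<longleftrightarrow> (\<forall>d<m. fps_nth f d = 0)"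
proof (cases "f = 0")
  case False
  have "fps_X ^ m dvd f \<longleftrightarrow> m \<le> subdegree f"
    using False by (subst fps_dvd_iff) (simp_all add: fps_X_power_subdegree)
  also have "\<dots> \<longleftrightarrow> (\<forall>d<m. fps_nth f d = 0)"
  proof
    assume "m \<le> subdegree f"
    then show "\<forall>d<m. fps_nth f d = 0" by (intro allI impI nth_less_subdegree_zero) linarith
  next
    assume "\<forall>d<m. fps_nth f d = 0"
    then show "m \<le> subdegree f" using False by (simp add: subdegree_geI)
  qed
  finally show ?thesis .
qed simp

lemma t_pow_enat [simp]: "t_pow (enat m) = fps_X ^ m"
  by (simp add: t_pow_def)

lemma t_pow_infinity [simp]: "t_pow \<infinity> = 0"
  by (simp add: t_pow_def)

lemma t_pow_dvd_iff: "t_pow e dvd f \<longleftrightarrow> (\<forall>d. enat d < e \<longrightarrow> fps_nth f d = 0)"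
  by (cases e) (auto simp: t_pow_def fps_X_power_dvd_iff fps_eq_iff)

lemma t_pow_dvd_t_pow_iff: "t_pow e dvd t_pow a \<longleftrightarrow> e \<le> a"
proof (cases a)
  case (enat m)
  have "(\<forall>d. enat d < e \<longrightarrow> d \<noteq> m) \<longleftrightarrow> \<not> enat m < e" by auto
  then show ?thesis using enat by (simp add: t_pow_dvd_iff fps_X_power_nth not_less)
qed simp

lemma t_pow_add: "t_pow (a + b) = t_pow a * t_pow b"
  unfolding t_pow_def by (cases a; cases b) (auto simp: power_add)

lemma t_pow_sum: "t_pow (\<Sum>i\<in>S. f i) = (\<Prod>i\<in>S. t_pow (f i))"
proof (induction S rule: infinite_finite_induct)
  case (insert x F)
  then show ?case by (simp add: t_pow_add)
qed (auto simp: t_pow_def zero_enat_def)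

section \<open>Divisibility of minors\<close>

definition minors_dvd :: "nat \<Rightarrow> nat \<Rightarrow> (nat \<Rightarrow> nat \<Rightarrow> complex fps) \<Rightarrow> nat \<Rightarrow> enat \<Rightarrow> bool" where
  "minors_dvd r s A m e \<longleftrightarrow> (\<forall>is js. length is = m \<longrightarrow> length js = m \<longrightarrow>
      set is \<subseteq> {..<r} \<longrightarrow> set js \<subseteq> {..<s} \<longrightarrow> t_pow e dvd minor A is js)"

lemma minors_dvd_antimono: "e' \<le> e \<Longrightarrow> minors_dvd r s A m e \<Longrightarrow> minors_dvd r s A m e'"
  unfolding minors_dvd_def using t_pow_dvd_t_pow_iff dvd_trans by blast

lemma minors_dvd_mult_left:
  assumes "minors_dvd r s A m e" shows "minors_dvd r' s (mat_mult r g A) m e"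
  unfolding minors_dvd_def
proof (intro allI impI)
  fix "is" js assume h: "length is = m" "length js = m" "set is \<subseteq> {..<r'}" "set js \<subseteq> {..<s}"
  show "t_pow e dvd minor (mat_mult r g A) is js"
    unfolding minor_mat_mult_left[OF h(1)]
  proof (intro dvd_sum dvd_mult)
    fix f assume "f \<in> Pi\<^sub>E {..<m} (\<lambda>_. {..<r})"
    then have "set (map f [0..<m]) \<subseteq> {..<r}" by (auto simp: PiE_def Pi_def)
    then show "t_pow e dvd minor A (map f [0..<m]) js" using assms h unfolding minors_dvd_def by auto
  qed
qed

lemma minors_dvd_mat_transp:
  assumes "minors_dvd r s A m e" shows "minors_dvd s r (mat_transp A) m e"
  unfolding minors_dvd_def
proof (intro allI impI)
  fix "is" js
  assume l: "length is = m" "length js = m" "set is \<subseteq> {..<s}" "set js \<subseteq> {..<r}"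
  then have "t_pow e dvd minor A js is" using assms unfolding minors_dvd_def by blast
  then show "t_pow e dvd minor (mat_transp A) is js" using minor_mat_transp[of "is" js A] l by simp
qed

lemma minors_dvd_mult_right:
  assumes "minors_dvd r s A m e" shows "minors_dvd r s' (mat_mult s A h) m e"
proof -
  have "minors_dvd s' r (mat_mult s (mat_transp h) (mat_transp A)) m e"
    by (intro minors_dvd_mult_left minors_dvd_mat_transp assms)
  from minors_dvd_mat_transp[OF this] show ?thesis by (simp add: mat_transp_mat_mult)
qed

lemma minors_dvd_arc_equiv:
  assumes "arc_equiv r s A B" "B \<in> mats r s"
  shows "minors_dvd r s A m e \<longleftrightarrow> minors_dvd r s B m e"
proof -
  have *: "minors_dvd r s A m e" if "arc_equiv r s A B" "minors_dvd r s B m e" for A B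
    using that unfolding arc_equiv_def by (auto intro: minors_dvd_mult_left minors_dvd_mult_right)
  show ?thesis using *[of A B] *[of B A] assms arc_equiv_sym by blast
qed

definition smallest_parts_sum :: "(nat \<Rightarrow> enat) \<Rightarrow> nat \<Rightarrow> nat \<Rightarrow> enat" where
  "smallest_parts_sum lam r m = (\<Sum>i\<in>{r-m..<r}. lam i)"

lemma smallest_parts_sum_0 [simp]: "smallest_parts_sum lam r 0 = 0"
  unfolding smallest_parts_sum_def by simp

lemma smallest_parts_sum_Suc:
  assumes "Suc m \<le> r"
  shows "smallest_parts_sum lam r (Suc m) = lam (r - Suc m) + smallest_parts_sum lam r m"
proof -
  have "{r - Suc m..<r} = insert (r - Suc m) {r - m..<r}" using assms by auto
  then show ?thesis unfolding smallest_parts_sum_def using assms by simp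
qed

lemma smallest_parts_sum_le_sum:
  assumes "S \<subseteq> {..<r}" "card S = m" "pre_partition r lam"
  shows "smallest_parts_sum lam r m \<le> (\<Sum>i\<in>S. lam i)"
  using assms(1,2)
proof (induction m arbitrary: S)
  case 0
  then have "S = {}" using finite_subset[OF 0(1)] by auto
  then show ?case by simp
next
  case (Suc m)
  have fin: "finite S" using finite_subset[OF Suc(2)] by auto
  define x where "x = Min S"
  have "S \<noteq> {}" using Suc(3) by auto
  then have xS: "x \<in> S" using Min_in[OF fin] x_def by blast
  have "S \<subseteq> {x..<r}" using Suc(2) Min_le[OF fin] x_def by auto
  then have "Suc m \<le> r - x" using card_mono[of "{x..<r}" S] Suc(3) by simp
  then have "lam (r - Suc m) \<le> lam x" using assms(3) unfolding pre_partition_def by auto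
  moreover have "smallest_parts_sum lam r m \<le> (\<Sum>i\<in>S - {x}. lam i)"
    using Suc(1)[of "S - {x}"] Suc(2,3) xS fin by auto
  ultimately have "lam (r - Suc m) + smallest_parts_sum lam r m \<le> lam x + (\<Sum>i\<in>S - {x}. lam i)"
    by (rule add_mono)
  then show ?case
    using smallest_parts_sum_Suc[of m r lam] sum.remove[OF fin xS, of lam] \<open>Suc m \<le> r - x\<close> by simp
qed

lemma minors_dvd_delta:
  assumes "r \<le> s" "pre_partition r lam"
  shows "minors_dvd r s (delta r s lam) m (smallest_parts_sum lam r m)"
  unfolding minors_dvd_def
proof (intro allI impI)
  fix "is" js :: "nat list"
  assume l: "length is = m" "length js = m" "set is \<subseteq> {..<r}" "set js \<subseteq> {..<s}"
  show "t_pow (smallest_parts_sum lam r m) dvd minor (delta r s lam) is js"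
  proof (cases "distinct is")
    case False
    have "minor (delta r s lam) is js = 0"
      by (rule minor_repeated_row) (use False l in simp_all)
    then show ?thesis by simp
  next
    case True
    have sum: "smallest_parts_sum lam r m \<le> (\<Sum>l<m. lam (is ! l))"
      using smallest_parts_sum_le_sum[OF l(3) _ assms(2)] True l
      by (simp add: distinct_card sum.distinct_set_conv_list sum_list_sum_nth atLeast0LessThan)
    have term_dvd: "t_pow (smallest_parts_sum lam r m) dvd (\<Prod>l<m. delta r s lam (is ! l) (js ! p l))" for p
    proof (cases "\<forall>l<m. delta r s lam (is ! l) (js ! p l) = t_pow (lam (is ! l))")
      case True
      then have "(\<Prod>l<m. delta r s lam (is ! l) (js ! p l)) = t_pow (\<Sum>l<m. lam (is ! l))"
        by (simp add: t_pow_sum)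
      then show ?thesis using sum t_pow_dvd_t_pow_iff by simp
    next
      case False
      then have "(\<Prod>l<m. delta r s lam (is ! l) (js ! p l)) = 0"
        by (auto simp: delta_def split: if_splits)
      then show ?thesis by (metis dvd_0_right)
    qed
    show ?thesis unfolding minor_def l(1) by (intro dvd_sum dvd_mult term_dvd)
  qed
qed

lemma minor_delta_trailing:
  assumes "r \<le> s" "m \<le> r"
  shows "minor (delta r s lam) [r-m..<r] [s-m..<s] = t_pow (smallest_parts_sum lam r m)"
proof -
  let ?M = "mat m m (\<lambda>(i,j). delta r s lam ([r-m..<r] ! i) ([s-m..<s] ! j))"
  have "upper_triangular ?M" using assms by (auto simp: upper_triangular_def delta_def)
  then have "det ?M = (\<Prod>i=0..<m. ?M $$ (i,i))"
    using det_upper_triangular[of ?M m] by (simp add: prod_list_diag_prod)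
  moreover have "minor (delta r s lam) [r-m..<r] [s-m..<s] = det ?M"
    using minor_eq_det[of "[s-m..<s]" "[r-m..<r]"] assms by simp
  ultimately have "minor (delta r s lam) [r-m..<r] [s-m..<s] = (\<Prod>i=0..<m. ?M $$ (i,i))"
    by simp
  also have "\<dots> = (\<Prod>i=0..<m. t_pow (lam (i + (r - m))))"
    using assms
    by (intro prod.cong refl) (auto simp: delta_def intro!: arg_cong[where f = "\<lambda>i. t_pow (lam i)"])
  also have "\<dots> = t_pow (smallest_parts_sum lam r m)"
    unfolding smallest_parts_sum_def t_pow_sum
    using prod.shift_bounds_nat_ivl[of "\<lambda>i. t_pow (lam i)" 0 "r - m" m] assms by simp
  finally show ?thesis .
qed

lemma minors_dvd_delta_iff:
  assumes "r \<le> s" "pre_partition r lam" "m \<le> r"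
  shows "minors_dvd r s (delta r s lam) m e \<longleftrightarrow> e \<le> smallest_parts_sum lam r m"
proof
  assume "minors_dvd r s (delta r s lam) m e"
  moreover have "length [r-m..<r] = m" "length [s-m..<s] = m"
    "set [r-m..<r] \<subseteq> {..<r}" "set [s-m..<s] \<subseteq> {..<s}"
    using assms by auto
  ultimately have "t_pow e dvd minor (delta r s lam) [r-m..<r] [s-m..<s]"
    unfolding minors_dvd_def by blast
  then show "e \<le> smallest_parts_sum lam r m"
    unfolding minor_delta_trailing[OF assms(1,3)] t_pow_dvd_t_pow_iff .
qed (use minors_dvd_antimono minors_dvd_delta[OF assms(1,2)] in blast)

section \<open>Smith normal form over \<open>\<complex>[[t]]\<close>\<close>

definition swap_mat :: "nat \<Rightarrow> nat \<Rightarrow> nat \<Rightarrow> nat \<Rightarrow> nat \<Rightarrow> 'a::comm_ring_1" where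
  "swap_mat n a b = (\<lambda>i j. if i < n \<and> j < n \<and> j = Transposition.transpose a b i then 1 else 0)"

lemma transpose_less_iff: "a < n \<Longrightarrow> b < n \<Longrightarrow> Transposition.transpose a b i < n \<longleftrightarrow> i < n"
  by (auto simp: Transposition.transpose_def)

lemma swap_mat_mult_left:
  assumes "a < n" "b < n"
  shows "mat_mult n (swap_mat n a b) X i j = (if i < n then X (Transposition.transpose a b i) j else 0)"
proof -
  have "mat_mult n (swap_mat n a b) X i j
      = (\<Sum>l<n. if Transposition.transpose a b i = l then (if i < n then X l j else 0) else 0)"
    unfolding mat_mult_def swap_mat_def using assms by (intro sum.cong) (auto simp: transpose_less_iff)
  then show ?thesis using assms by (simp add: transpose_less_iff)
qed

lemma swap_mat_mult_right:
  assumes "a < n" "b < n"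
  shows "mat_mult n X (swap_mat n a b) i j = (if j < n then X i (Transposition.transpose a b j) else 0)"
proof -
  have "mat_mult n X (swap_mat n a b) i j
      = (\<Sum>l<n. if l = Transposition.transpose a b j then (if j < n then X i l else 0) else 0)"
    unfolding mat_mult_def swap_mat_def using assms
    by (intro sum.cong) (auto simp: transpose_less_iff Transposition.transpose_def)
  then show ?thesis using assms by (simp add: transpose_less_iff)
qed

lemma swap_mat_GL_arc:
  assumes "a < n" "b < n" shows "swap_mat n a b \<in> GL_arc n"
proof -
  have "swap_mat n a b \<in> mats n n" unfolding swap_mat_def mats_def by auto
  moreover have "mat_mult n (swap_mat n a b) (swap_mat n a b) = mat_one n"
  proof (intro ext)
    fix i j
    show "mat_mult n (swap_mat n a b) (swap_mat n a b) i j = mat_one n i j"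
      unfolding swap_mat_mult_left[OF assms]
      by (auto simp: swap_mat_def mat_one_def transpose_less_iff[OF assms])
  qed
  ultimately show ?thesis by (blast intro: GL_arcI)
qed

lemma arc_equiv_swap:
  assumes "A \<in> mats r s" "a < r" "a' < r" "b < s" "b' < s"
  shows "arc_equiv r s A (\<lambda>i j. if i < r \<and> j < s
    then A (Transposition.transpose a a' i) (Transposition.transpose b b' j) else 0)"
    (is "arc_equiv r s A ?A'")
proof (rule arc_equiv_sym)
  have "?A' = mat_mult s (mat_mult r (swap_mat r a a') A) (swap_mat s b b')"
    using assms by (intro ext) (simp add: swap_mat_mult_left swap_mat_mult_right)
  then show "arc_equiv r s ?A' A"
    unfolding arc_equiv_def using swap_mat_GL_arc assms by blast
  show "A \<in> mats r s" by fact
qed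

definition block_diag :: "nat \<Rightarrow> nat \<Rightarrow> (nat \<Rightarrow> nat \<Rightarrow> 'a::zero) \<Rightarrow> 'a \<Rightarrow> nat \<Rightarrow> nat \<Rightarrow> 'a" where
  "block_diag r s B z = (\<lambda>i j. if i < r \<and> j < s then B i j else if i = r \<and> j = s then z else 0)"

lemma block_diag_mats: "block_diag r s B z \<in> mats (Suc r) (Suc s)"
  unfolding block_diag_def mats_def by auto

lemma block_diag_mult:
  "mat_mult (Suc m) (block_diag n m A a) (block_diag m p B b) = block_diag n p (mat_mult m A B) (a * b)"
proof (intro ext)
  fix i j
  have "mat_mult (Suc m) (block_diag n m A a) (block_diag m p B b) i j
      = (\<Sum>l<m. (if i < n then A i l else 0) * (if j < p then B l j else 0))
        + (if i = n then a else 0) * (if j = p then b else 0)"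
    unfolding mat_mult_def block_diag_def by (auto intro!: sum.cong)
  then show "mat_mult (Suc m) (block_diag n m A a) (block_diag m p B b) i j
      = block_diag n p (mat_mult m A B) (a * b) i j"
    by (auto simp: block_diag_def mat_mult_def)
qed

lemma block_diag_GL_arc:
  assumes "g \<in> GL_arc n" "z * w = 1" shows "block_diag n n g z \<in> GL_arc (Suc n)"
proof (rule GL_arcI[OF block_diag_mats block_diag_mats])
  have one: "block_diag n n (mat_one n) 1 = mat_one (Suc n)"
    unfolding block_diag_def mat_one_def by (intro ext) auto
  show "mat_mult (Suc n) (block_diag n n g z) (block_diag n n (mat_inv_arc n g) w) = mat_one (Suc n)"
    "mat_mult (Suc n) (block_diag n n (mat_inv_arc n g) w) (block_diag n n g z) = mat_one (Suc n)"
    using mat_inv_arc[OF assms(1)] assms(2) one by (simp_all add: block_diag_mult mult.commute)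
qed

lemma arc_equiv_block_diag:
  assumes "arc_equiv r s B B'" "u * v = 1"
  shows "arc_equiv (Suc r) (Suc s) (block_diag r s B (z * u)) (block_diag r s B' z)"
proof -
  obtain g k where "g \<in> GL_arc r" "k \<in> GL_arc s" "B = mat_mult s (mat_mult r g B') k"
    using assms(1) unfolding arc_equiv_def by blast
  moreover have "block_diag r s (mat_mult s (mat_mult r g B') k) (z * u)
    = mat_mult (Suc s) (mat_mult (Suc r) (block_diag r r g 1) (block_diag r s B' z)) (block_diag s s k u)"
    by (simp add: block_diag_mult)
  ultimately show ?thesis
    unfolding arc_equiv_def using block_diag_GL_arc assms(2) by (metis mult_1)
qed

lemma delta_Suc:
  "r \<le> s \<Longrightarrow> delta (Suc r) (Suc s) (lam(r := e)) = block_diag r s (delta r s lam) (t_pow e)"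
  unfolding delta_def block_diag_def by (intro ext) auto

lemma pre_partition_Suc:
  assumes "pre_partition r lam" "\<And>i. i < r \<Longrightarrow> e \<le> lam i"
  shows "pre_partition (Suc r) (lam(r := e))"
  unfolding pre_partition_def
proof (intro allI impI)
  fix i j :: nat assume ij: "i \<le> j" "j < Suc r"
  show "(lam(r := e)) j \<le> (lam(r := e)) i"
  proof (cases "j = r")
    case True
    then show ?thesis using assms(2) ij by (cases "i = r") auto
  next
    case False
    then show ?thesis using assms(1) ij unfolding pre_partition_def by auto
  qed
qed

definition transvection :: "nat \<Rightarrow> (nat \<Rightarrow> 'a::comm_ring_1) \<Rightarrow> nat \<Rightarrow> nat \<Rightarrow> 'a" where
  "transvection n v = (\<lambda>i j. (if i = j \<and> i \<le> n then 1 else 0) + (if j = n \<and> i < n then v i else 0))"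

lemma transvection_mult_left:
  "mat_mult (Suc n) (transvection n v) X i j
    = (if i \<le> n then X i j else 0) + (if i < n then v i * X n j else 0)"
proof -
  have "mat_mult (Suc n) (transvection n v) X i j =
     (\<Sum>l<Suc n. (if i = l then (if i \<le> n then X l j else 0) else 0)
       + (if l = n then (if i < n then v i * X l j else 0) else 0))"
    unfolding mat_mult_def transvection_def by (intro sum.cong) (auto simp: distrib_right)
  then show ?thesis by (simp add: sum.distrib)
qed

lemma transvection_mult_right:
  "mat_mult (Suc n) X (mat_transp (transvection n w)) i j
    = (if j \<le> n then X i j else 0) + (if j < n then X i n * w j else 0)"
proof -
  have "mat_mult (Suc n) X (mat_transp (transvection n w)) i j =
     (\<Sum>l<Suc n. (if l = j then (if j \<le> n then X i l else 0) else 0)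
       + (if l = n then (if j < n then X i l * w j else 0) else 0))"
    unfolding mat_mult_def mat_transp_def transvection_def by (intro sum.cong) (auto simp: distrib_left)
  then show ?thesis by (simp add: sum.distrib)
qed

lemma transvection_GL_arc: "transvection n v \<in> GL_arc (Suc n)"
proof (rule GL_arcI)
  have mult: "mat_mult (Suc n) (transvection n v) (transvection n w) = transvection n (\<lambda>i. v i + w i)" for v w
  proof (intro ext)
    fix i j
    show "mat_mult (Suc n) (transvection n v) (transvection n w) i j = transvection n (\<lambda>i. v i + w i) i j"
      unfolding transvection_mult_left by (auto simp: transvection_def distrib_right)
  qed
  have zero: "transvection n (\<lambda>i. 0) = mat_one (Suc n)"
    unfolding transvection_def mat_one_def by (intro ext) auto
  show "mat_mult (Suc n) (transvection n v) (transvection n (\<lambda>i. - v i)) = mat_one (Suc n)"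
    "mat_mult (Suc n) (transvection n (\<lambda>i. - v i)) (transvection n v) = mat_one (Suc n)"
    by (simp_all add: mult zero)
qed (auto simp: transvection_def mats_def)

text \<open>\<open>\<gamma>\<close> and \<open>\<beta>\<close> are the quotients of the last column and the last row by the corner
  entry; the corresponding row and column operations clear them.\<close>

lemma arc_equiv_clear_pivot:
  assumes A: "A \<in> mats (Suc r) (Suc s)"
    and col: "\<And>i. \<gamma> i * A r s = A i s" and row: "\<And>j. A r s * \<beta> j = A r j"
  shows "arc_equiv (Suc r) (Suc s) A
    (block_diag r s (\<lambda>i j. if i < r \<and> j < s then A i j - \<gamma> i * A r j else 0) (A r s))"
    (is "arc_equiv _ _ A ?M")
proof -
  let ?L = "transvection r \<gamma>" and ?R = "mat_transp (transvection s \<beta>)"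
  have "A = mat_mult (Suc s) (mat_mult (Suc r) ?L ?M) ?R"
  proof (intro ext)
    fix i j
    have "mat_mult (Suc s) (mat_mult (Suc r) ?L ?M) ?R i j =
      (if j \<le> s then (if i \<le> r then ?M i j else 0) + (if i < r then \<gamma> i * ?M r j else 0) else 0) +
      (if j < s then ((if i \<le> r then ?M i s else 0) + (if i < r then \<gamma> i * ?M r s else 0)) * \<beta> j else 0)"
      unfolding transvection_mult_right transvection_mult_left ..
    also have "\<dots> = A i j"
    proof (cases "i \<le> r \<and> j \<le> s")
      case True
      then consider "i < r" "j < s" | "i < r" "j = s" | "i = r" "j < s" | "i = r" "j = s" by linarith
      then show ?thesis
      proof cases
        case 1
        have "\<gamma> i * A r s * \<beta> j = \<gamma> i * A r j" by (simp add: mult.assoc row)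
        with 1 show ?thesis by (simp add: block_diag_def)
      qed (simp_all add: block_diag_def col row)
    qed (use A in \<open>auto simp: block_diag_def mats_def\<close>)
    finally show "A i j = mat_mult (Suc s) (mat_mult (Suc r) ?L ?M) ?R i j" ..
  qed
  then show ?thesis
    unfolding arc_equiv_def using transvection_GL_arc mat_transp_GL_arc by blast
qed

text \<open>An entry of minimal order divides all others.\<close>

lemma exists_dvd_all_entries:
  fixes A :: "nat \<Rightarrow> nat \<Rightarrow> complex fps"
  assumes "A \<in> mats r s" "A \<noteq> (\<lambda>i j. 0)"
  obtains i0 j0 where "i0 < r" "j0 < s" "A i0 j0 \<noteq> 0" "\<And>i j. A i0 j0 dvd A i j"
proof -
  define P where "P a \<longleftrightarrow> (\<exists>i j. A i j \<noteq> 0 \<and> subdegree (A i j) = a)" for a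
  have "\<exists>a. P a" using assms(2) unfolding P_def by (auto simp: fun_eq_iff)
  then have "P (LEAST a. P a)" by (rule LeastI_ex)
  then obtain i0 j0 where ij0: "A i0 j0 \<noteq> 0" "subdegree (A i0 j0) = (LEAST a. P a)"
    unfolding P_def by auto
  have "A i0 j0 dvd A i j" for i j
  proof (cases "A i j = 0")
    case False
    then have "subdegree (A i0 j0) \<le> subdegree (A i j)"
      unfolding ij0(2) by (intro Least_le) (auto simp: P_def)
    then show ?thesis using False ij0(1) by (simp add: fps_dvd_iff)
  qed simp
  moreover have "\<not> (r \<le> i0 \<or> s \<le> j0)" using assms(1) ij0(1) unfolding mats_def by auto
  ultimately show ?thesis using that ij0(1) by (meson not_le)
qed

lemma arc_equiv_block_diag_pivot:
  assumes A: "A \<in> mats (Suc r) (Suc s)" and "A \<noteq> (\<lambda>i j. 0)"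
  obtains B u v a where "B \<in> mats r s" "u * v = 1" "\<And>i j. fps_X ^ a dvd B i j"
    "arc_equiv (Suc r) (Suc s) A (block_diag r s B (fps_X ^ a * u))"
proof -
  obtain i0 j0 where ij0: "i0 < Suc r" "j0 < Suc s" "A i0 j0 \<noteq> 0" "\<And>i j. A i0 j0 dvd A i j"
    using exists_dvd_all_entries[OF assms] by blast
  define A' where "A' i j = (if i < Suc r \<and> j < Suc s
    then A (Transposition.transpose i0 r i) (Transposition.transpose j0 s j) else 0)" for i j
  define p where "p = A' r s"
  have AA': "arc_equiv (Suc r) (Suc s) A A'"
    unfolding A'_def using arc_equiv_swap[OF A] ij0 by simp
  have p: "p = A i0 j0" unfolding p_def A'_def by simp
  have p_dvd: "p dvd A' i j" for i j
    unfolding p A'_def using ij0(4) by simp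
  define B where "B i j = (if i < r \<and> j < s then A' i j - A' i s div p * A' r j else 0)" for i j
  have "A' \<in> mats (Suc r) (Suc s)" unfolding A'_def mats_def by auto
  from arc_equiv_clear_pivot[OF this, of "\<lambda>i. A' i s div p" "\<lambda>j. A' r j div p"]
  have "arc_equiv (Suc r) (Suc s) A' (block_diag r s B p)"
    using p_dvd unfolding B_def p_def by simp
  define a where "a = subdegree p"
  define u where "u = fps_shift a p"
  have pu: "p = fps_X ^ a * u"
    unfolding u_def a_def by (rule fps_conv_fps_X_power_mult_fps_shift) simp
  have "fps_nth u 0 \<noteq> 0"
    using nth_subdegree_nonzero[of p] ij0(3) p unfolding u_def a_def by simp
  then obtain v where "u * v = 1" by (metis fps_is_unit_iff dvdE)
  moreover have "B \<in> mats r s" unfolding B_def mats_def by auto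
  moreover have "fps_X ^ a dvd B i j" for i j
  proof -
    have "fps_X ^ a dvd A' i j" for i j using dvd_trans[OF _ p_dvd] pu by simp
    then show ?thesis unfolding B_def by (simp add: dvd_diff)
  qed
  moreover have "arc_equiv (Suc r) (Suc s) A (block_diag r s B (fps_X ^ a * u))"
    using arc_equiv_trans[OF AA'] \<open>arc_equiv (Suc r) (Suc s) A' (block_diag r s B p)\<close> pu by simp
  ultimately show ?thesis using that by blast
qed

lemma le_parts_if_dvd_entries:
  assumes "r \<le> s" "pre_partition r lam" "arc_equiv r s B (delta r s lam)"
    "\<And>i j. t_pow e dvd B i j" "i < r"
  shows "e \<le> lam i"
proof -
  have "minors_dvd r s B 1 e"
    unfolding minors_dvd_def
    by (auto simp: length_Suc_conv minor_single assms(4))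
  then have "minors_dvd r s (delta r s lam) 1 e"
    using minors_dvd_arc_equiv[OF assms(3) delta_mats[OF assms(1)]] by simp
  then have "e \<le> smallest_parts_sum lam r 1"
    using minors_dvd_delta_iff[OF assms(1,2)] assms(5) by simp
  also have "\<dots> = lam (r - 1)"
    using smallest_parts_sum_Suc[of 0 r lam] assms(5) by simp
  also have "\<dots> \<le> lam i"
    using assms(2,5) unfolding pre_partition_def by simp
  finally show ?thesis .
qed

theorem smith_normal_form:
  assumes "r \<le> s" "A \<in> mats r s"
  shows "\<exists>lam. pre_partition r lam \<and> arc_equiv r s A (delta r s lam)"
  using assms
proof (induction r arbitrary: s A)
  case 0
  have "delta 0 s (\<lambda>_. \<infinity>) = A" using "0.prems"(2) unfolding delta_def mats_def by (intro ext) auto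
  then show ?case using arc_equiv_refl[OF "0.prems"(2)] unfolding pre_partition_def
    by (intro exI[of _ "\<lambda>_. \<infinity>"]) simp
next
  case (Suc r)
  obtain s' where s: "s = Suc s'" using Suc.prems(1) by (cases s) auto
  have rs: "r \<le> s'" and A: "A \<in> mats (Suc r) (Suc s')" using Suc.prems s by auto
  show ?case
  proof (cases "A = (\<lambda>i j. 0)")
    case True
    have "delta (Suc r) s (\<lambda>_. \<infinity>) = A" unfolding True delta_def by (intro ext) simp
    then show ?thesis using arc_equiv_refl[OF Suc.prems(2)] unfolding pre_partition_def
      by (intro exI[of _ "\<lambda>_. \<infinity>"]) simp
  next
    case False
    obtain B u v a where B: "B \<in> mats r s'" "u * v = 1" "\<And>i j. fps_X ^ a dvd B i j"
      and AB: "arc_equiv (Suc r) (Suc s') A (block_diag r s' B (fps_X ^ a * u))"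
      by (rule arc_equiv_block_diag_pivot[OF A False], rule that)
    obtain lam' where lam': "pre_partition r lam'" "arc_equiv r s' B (delta r s' lam')"
      using Suc.IH[OF rs B(1)] by blast
    have "enat a \<le> lam' i" if "i < r" for i
      by (rule le_parts_if_dvd_entries[OF rs lam' _ that]) (use B(3) in simp)
    then have "pre_partition (Suc r) (lam'(r := enat a))"
      using pre_partition_Suc[OF lam'(1)] by blast
    moreover have "arc_equiv (Suc r) (Suc s') A (delta (Suc r) (Suc s') (lam'(r := enat a)))"
      using arc_equiv_trans[OF AB arc_equiv_block_diag[OF lam'(2) B(2), of "fps_X ^ a"]]
      by (simp add: delta_Suc[OF rs])
    ultimately show ?thesis unfolding s by blast
  qed
qed

section \<open>Zariski-closed sets of jets\<close>

lemma poly_funs_sum: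
  "finite S \<Longrightarrow> (\<And>i. i \<in> S \<Longrightarrow> f i \<in> poly_funs) \<Longrightarrow> (\<lambda>x. \<Sum>i\<in>S. f i x) \<in> poly_funs"
proof (induction S rule: finite_induct)
  case empty
  then show ?case using poly_funs.const[of 0] by simp
next
  case (insert a S)
  then show ?case using poly_funs.add[of "f a" "\<lambda>x. \<Sum>i\<in>S. f i x"] by simp
qed

definition poly_coeffs :: "(('v \<Rightarrow> complex) \<Rightarrow> complex fps) \<Rightarrow> bool" where
  "poly_coeffs F \<longleftrightarrow> (\<forall>d. (\<lambda>x. fps_nth (F x) d) \<in> poly_funs)"

lemma poly_coeffs_const: "poly_coeffs (\<lambda>x. c)"
  unfolding poly_coeffs_def by (simp add: poly_funs.const)

lemma poly_coeffs_add: "poly_coeffs F \<Longrightarrow> poly_coeffs G \<Longrightarrow> poly_coeffs (\<lambda>x. F x + G x)"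
  unfolding poly_coeffs_def by (simp add: poly_funs.add)

lemma poly_coeffs_mult:
  assumes "poly_coeffs F" "poly_coeffs G" shows "poly_coeffs (\<lambda>x. F x * G x)"
  unfolding poly_coeffs_def
proof
  fix d
  have "(\<lambda>x. \<Sum>i\<in>{0..d}. fps_nth (F x) i * fps_nth (G x) (d - i)) \<in> poly_funs"
    using assms unfolding poly_coeffs_def by (intro poly_funs_sum poly_funs.mult) auto
  then show "(\<lambda>x. fps_nth (F x * G x) d) \<in> poly_funs" by (simp add: fps_mult_nth)
qed

lemma poly_coeffs_sum:
  "finite S \<Longrightarrow> (\<And>i. i \<in> S \<Longrightarrow> poly_coeffs (F i)) \<Longrightarrow> poly_coeffs (\<lambda>x. \<Sum>i\<in>S. F i x)"
  by (induction S rule: finite_induct) (auto intro: poly_coeffs_const poly_coeffs_add)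

lemma poly_coeffs_prod:
  "finite S \<Longrightarrow> (\<And>i. i \<in> S \<Longrightarrow> poly_coeffs (F i)) \<Longrightarrow> poly_coeffs (\<lambda>x. \<Prod>i\<in>S. F i x)"
  by (induction S rule: finite_induct) (auto intro: poly_coeffs_const poly_coeffs_mult)

lemma poly_coeffs_minor_jet_mat: "poly_coeffs (\<lambda>x. minor (jet_mat x) is js)"
proof -
  have "poly_coeffs (\<lambda>x. jet_mat x i j)" for i j
    unfolding poly_coeffs_def jet_mat_def by (simp add: poly_funs.var)
  then show ?thesis
    unfolding minor_def
    by (intro poly_coeffs_sum poly_coeffs_mult poly_coeffs_const poly_coeffs_prod finite_permutations) auto
qed

lemma zariski_closed_in_zero_set:
  "(\<And>c. c \<in> T \<Longrightarrow> f c \<in> poly_funs) \<Longrightarrow> zariski_closed_in X {x \<in> X. \<forall>c\<in>T. f c x = 0}"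
  unfolding zariski_closed_in_def by (rule exI[of _ "f ` T"]) auto

lemma zariski_closed_in_minor_coeffs:
  "zariski_closed_in X {x \<in> X. \<forall>is js d. P is js d \<longrightarrow> fps_nth (minor (jet_mat x) is js) d = 0}"
proof -
  have "(\<lambda>x. fps_nth (minor (jet_mat x) is js) d) \<in> poly_funs" for "is" js d
    using poly_coeffs_minor_jet_mat unfolding poly_coeffs_def by blast
  then have "zariski_closed_in X {x \<in> X. \<forall>c\<in>{(is, js, d). P is js d}.
      (\<lambda>(is, js, d) x. fps_nth (minor (jet_mat x) is js) d) c x = 0}"
    by (intro zariski_closed_in_zero_set) auto
  then show ?thesis by (rule back_subst) auto
qed

lemma zariski_closed_in_Int:
  assumes "zariski_closed_in X Z1" "zariski_closed_in X Z2"
  shows "zariski_closed_in X (Z1 \<inter> Z2)"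
proof -
  obtain F1 where "F1 \<subseteq> poly_funs" "Z1 = {x \<in> X. \<forall>f\<in>F1. f x = 0}"
    using assms(1) unfolding zariski_closed_in_def by blast
  moreover obtain F2 where "F2 \<subseteq> poly_funs" "Z2 = {x \<in> X. \<forall>f\<in>F2. f x = 0}"
    using assms(2) unfolding zariski_closed_in_def by blast
  ultimately
  show ?thesis unfolding zariski_closed_in_def by (intro exI[of _ "F1 \<union> F2"]) auto
qed

text \<open>The union is cut out by the pairwise products of the equations.\<close>

lemma zariski_closed_in_Un:
  assumes "zariski_closed_in X Z1" "zariski_closed_in X Z2"
  shows "zariski_closed_in X (Z1 \<union> Z2)"
proof -
  obtain F1 where F1: "F1 \<subseteq> poly_funs" "Z1 = {x \<in> X. \<forall>f\<in>F1. f x = 0}"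
    using assms(1) unfolding zariski_closed_in_def by blast
  obtain F2 where F2: "F2 \<subseteq> poly_funs" "Z2 = {x \<in> X. \<forall>f\<in>F2. f x = 0}"
    using assms(2) unfolding zariski_closed_in_def by blast
  note F = F1 F2
  define F where "F = {(\<lambda>x. f x * g x) | f g. f \<in> F1 \<and> g \<in> F2}"
  have "F \<subseteq> poly_funs" using F unfolding F_def by (auto intro: poly_funs.mult)
  moreover have "Z1 \<union> Z2 = {x \<in> X. \<forall>h\<in>F. h x = 0}"
  proof safe
    fix x assume x: "x \<in> X" "\<forall>h\<in>F. h x = 0" "x \<notin> Z2"
    then obtain g where g: "g \<in> F2" "g x \<noteq> 0" using F by auto
    have "f x = 0" if "f \<in> F1" for f
    proof -
      have "(\<lambda>y. f y * g y) \<in> F" unfolding F_def using g that by blast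
      with x(2) have "(\<lambda>y. f y * g y) x = 0" by (rule bspec)
      then show ?thesis using g(2) by simp
    qed
    then show "x \<in> Z1" unfolding F(2) using x by simp
  qed (use F F_def in auto)
  ultimately show ?thesis unfolding zariski_closed_in_def by blast
qed

lemma zariski_closed_in_self: "zariski_closed_in X X"
  unfolding zariski_closed_in_def by (intro exI[of _ "{}"]) auto

lemma zariski_closed_in_empty: "zariski_closed_in X {}"
  unfolding zariski_closed_in_def by (intro exI[of _ "{\<lambda>x. 1}"]) (auto intro: poly_funs.const)

lemma locally_closed_in_Int:
  assumes "locally_closed_in X L1" "locally_closed_in X L2"
  shows "locally_closed_in X (L1 \<inter> L2)"
proof -
  obtain U1 Z1 where h1: "zariski_open_in X U1" "U1 \<subseteq> X" "zariski_closed_in X Z1" "L1 = U1 \<inter> Z1"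
    using assms(1) unfolding locally_closed_in_def by blast
  obtain U2 Z2 where h2: "zariski_open_in X U2" "U2 \<subseteq> X" "zariski_closed_in X Z2" "L2 = U2 \<inter> Z2"
    using assms(2) unfolding locally_closed_in_def by blast
  note h = h1 h2
  have "zariski_open_in X (U1 \<inter> U2)"
    using h zariski_closed_in_Un[of X "X - U1" "X - U2"] unfolding zariski_open_in_def by (simp add: Diff_Int)
  then show ?thesis unfolding locally_closed_in_def using h zariski_closed_in_Int[of X Z1 Z2]
    by (intro exI[of _ "U1 \<inter> U2"] exI[of _ "Z1 \<inter> Z2"]) auto
qed

lemma locally_closed_in_closed:
  assumes "zariski_closed_in X Z" shows "locally_closed_in X Z"
proof -
  have "Z \<subseteq> X" using assms unfolding zariski_closed_in_def by auto
  then show ?thesis unfolding locally_closed_in_def zariski_open_in_def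
    using assms zariski_closed_in_empty by (intro exI[of _ X] exI[of _ Z]) auto
qed

lemma locally_closed_in_Diff:
  assumes "zariski_closed_in X Z" "zariski_closed_in X Z'"
  shows "locally_closed_in X (Z - Z')"
proof -
  have "Z \<subseteq> X" "Z' \<subseteq> X" using assms unfolding zariski_closed_in_def by auto
  moreover have "zariski_open_in X (X - Z')"
    unfolding zariski_open_in_def using assms(2) \<open>Z' \<subseteq> X\<close> by (simp add: double_diff)
  ultimately show ?thesis unfolding locally_closed_in_def using assms(1)
    by (intro exI[of _ "X - Z'"] exI[of _ Z]) auto
qed

lemma locally_closed_in_Inter:
  "finite I \<Longrightarrow> (\<And>i. i \<in> I \<Longrightarrow> locally_closed_in X (L i)) \<Longrightarrow> locally_closed_in X (X \<inter> (\<Inter>i\<in>I. L i))"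
proof (induction I rule: finite_induct)
  case empty
  then show ?case using locally_closed_in_closed[OF zariski_closed_in_self] by simp
next
  case (insert a I)
  have "X \<inter> (\<Inter>i\<in>insert a I. L i) = L a \<inter> (X \<inter> (\<Inter>i\<in>I. L i))" by auto
  then show ?case using insert by (simp add: locally_closed_in_Int)
qed

definition agree_upto :: "nat \<Rightarrow> 'a::comm_ring_1 fps \<Rightarrow> 'a fps \<Rightarrow> bool" where
  "agree_upto n f g \<longleftrightarrow> (\<forall>d\<le>n. fps_nth f d = fps_nth g d)"

lemma agree_upto_refl: "agree_upto n f f"
  unfolding agree_upto_def by simp

lemma agree_upto_add: "agree_upto n f g \<Longrightarrow> agree_upto n f' g' \<Longrightarrow> agree_upto n (f + f') (g + g')"
  unfolding agree_upto_def by simp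

lemma agree_upto_mult:
  assumes "agree_upto n f g" "agree_upto n f' g'" shows "agree_upto n (f * f') (g * g')"
  unfolding agree_upto_def fps_mult_nth using assms unfolding agree_upto_def by (auto intro!: sum.cong)

lemma agree_upto_sum:
  "finite S \<Longrightarrow> (\<And>i. i \<in> S \<Longrightarrow> agree_upto n (f i) (g i)) \<Longrightarrow> agree_upto n (\<Sum>i\<in>S. f i) (\<Sum>i\<in>S. g i)"
  by (induction S rule: finite_induct) (auto intro: agree_upto_add agree_upto_refl)

lemma agree_upto_prod:
  "finite S \<Longrightarrow> (\<And>i. i \<in> S \<Longrightarrow> agree_upto n (f i) (g i)) \<Longrightarrow> agree_upto n (\<Prod>i\<in>S. f i) (\<Prod>i\<in>S. g i)"
  by (induction S rule: finite_induct) (auto intro: agree_upto_mult agree_upto_refl)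

lemma agree_upto_minor_trunc: "agree_upto n (minor (jet_mat (trunc n A)) is js) (minor A is js)"
  unfolding minor_def
proof (intro agree_upto_sum agree_upto_mult agree_upto_refl agree_upto_prod finite_permutations)
  fix l p
  show "agree_upto n (jet_mat (trunc n A) (is ! l) (js ! p l)) (A (is ! l) (js ! p l))"
    unfolding agree_upto_def jet_mat_def trunc_def by simp
qed auto

lemma trunc_jets: "A \<in> mats r s \<Longrightarrow> trunc n A \<in> jets r s n"
  unfolding jets_def trunc_def mats_def by auto

lemma trunc_Dk_jets:
  assumes "A \<in> Dk_arcs r s k" shows "trunc n A \<in> Dk_jets r s k n"
proof -
  have "fps_nth (minor (jet_mat (trunc n A)) is js) d = 0"
    if "(is, js) \<in> minor_indices r s (Suc k)" "d \<le> n" for "is" js d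
    using assms that agree_upto_minor_trunc[of n A "is" js] unfolding Dk_arcs_def agree_upto_def by auto
  then show ?thesis using assms trunc_jets unfolding Dk_jets_def Dk_arcs_def by blast
qed

lemma zariski_closed_in_Dk_jets: "zariski_closed_in (jets r s n) (Dk_jets r s k n)"
proof -
  have "Dk_jets r s k n = {x \<in> jets r s n. \<forall>is js d. ((is, js) \<in> minor_indices r s (Suc k) \<and> d \<le> n)
     \<longrightarrow> fps_nth (minor (jet_mat x) is js) d = 0}"
    unfolding Dk_jets_def by blast
  then show ?thesis by (simp only: zariski_closed_in_minor_coeffs)
qed

definition jet_minors_dvd :: "nat \<Rightarrow> nat \<Rightarrow> nat \<Rightarrow> (nat \<times> nat \<times> nat \<Rightarrow> complex) \<Rightarrow> nat \<Rightarrow> enat \<Rightarrow> bool" where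
  "jet_minors_dvd r s n x m e \<longleftrightarrow> (\<forall>is js. length is = m \<longrightarrow> length js = m \<longrightarrow>
      set is \<subseteq> {..<r} \<longrightarrow> set js \<subseteq> {..<s} \<longrightarrow>
      (\<forall>d. enat d < e \<longrightarrow> d \<le> n \<longrightarrow> fps_nth (minor (jet_mat x) is js) d = 0))"

lemma jet_minors_dvd_trunc:
  assumes "e \<le> enat (Suc n)"
  shows "jet_minors_dvd r s n (trunc n A) m e \<longleftrightarrow> minors_dvd r s A m e"
proof -
  have coeff: "fps_nth (minor (jet_mat (trunc n A)) is js) d = fps_nth (minor A is js) d"
    if "d \<le> n" for "is" js d
    using agree_upto_minor_trunc[of n A "is" js] that unfolding agree_upto_def by simp
  have "enat d < e \<Longrightarrow> d \<le> n" for d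
    using assms by (metis enat_ord_simps(2) less_Suc_eq_le order_less_le_trans)
  then show ?thesis
    unfolding jet_minors_dvd_def minors_dvd_def t_pow_dvd_iff using coeff by (metis (no_types, lifting))
qed

lemma zariski_closed_in_jet_minors_dvd:
  "zariski_closed_in (jets r s n) {x \<in> jets r s n. jet_minors_dvd r s n x m e}"
proof -
  have "{x \<in> jets r s n. jet_minors_dvd r s n x m e} = {x \<in> jets r s n. \<forall>is js d.
     (length is = m \<and> length js = m \<and> set is \<subseteq> {..<r} \<and> set js \<subseteq> {..<s} \<and> enat d < e \<and> d \<le> n)
       \<longrightarrow> fps_nth (minor (jet_mat x) is js) d = 0}"
    unfolding jet_minors_dvd_def by blast
  then show ?thesis by (simp only: zariski_closed_in_minor_coeffs)
qed

section \<open>Orbits as cylinders\<close>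

lemma Dk_arcs_iff_minors_dvd:
  assumes "A \<in> mats r s"
  shows "A \<in> Dk_arcs r s k \<longleftrightarrow> minors_dvd r s A (Suc k) \<infinity>"
  using assms minors_vanish_if_sorted_minors_vanish[of r s "Suc k" A]
  unfolding Dk_arcs_def minors_dvd_def minor_indices_def by auto

lemma minor_indices_empty: assumes "r < m" shows "minor_indices r s m = {}"
proof (rule ccontr)
  assume "minor_indices r s m \<noteq> {}"
  then obtain "is" where h: "length is = m" "sorted_wrt (<) is" "set is \<subseteq> {..<r}"
    unfolding minor_indices_def by auto
  then have "card (set is) = m" by (simp add: strict_sorted_iff distinct_card)
  moreover have "card (set is) \<le> r" using card_mono[OF _ h(3)] by simp
  ultimately show False using assms by simp
qed

lemma Dk_arcs_self: "Dk_arcs r s r = arcs r s"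
  unfolding Dk_arcs_def using minor_indices_empty[of r "Suc r" s] by auto

lemma downward_closed_eq_lessThan_card:
  assumes "T \<subseteq> {..<r}" "\<And>i j. i \<le> j \<Longrightarrow> j \<in> T \<Longrightarrow> i \<in> T"
  shows "T = {..<card T}"
proof (cases "T = {}")
  case False
  have fin: "finite T" using finite_subset[OF assms(1)] by simp
  define M where "M = Max T"
  have "T = {..M}"
  proof
    show "T \<subseteq> {..M}" using Max_ge[OF fin] unfolding M_def by auto
    show "{..M} \<subseteq> T" using Max_in[OF fin False] assms(2) unfolding M_def by auto
  qed
  then show ?thesis by (simp add: lessThan_Suc_atMost)
qed simp

lemma enat_le_not_Suc_le_iff:
  fixes x e :: enat
  assumes "e \<noteq> \<infinity>"
  shows "e \<le> x \<and> \<not> e + 1 \<le> x \<longleftrightarrow> x = e"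
  using assms by (cases e; cases x) (auto simp: one_enat_def)

definition minor_orders :: "nat \<Rightarrow> nat \<Rightarrow> nat \<Rightarrow> (nat \<Rightarrow> enat) \<Rightarrow> (nat \<Rightarrow> nat \<Rightarrow> complex fps) \<Rightarrow> bool" where
  "minor_orders r s k e A \<longleftrightarrow> (\<forall>m\<in>{1..k}. minors_dvd r s A m (e m) \<and> \<not> minors_dvd r s A m (e m + 1))"

text \<open>Orders bounded by \<open>n\<close> are decided by the coefficients of degree at most \<open>n\<close> of the
  minors, which cut out locally closed sets of \<open>n\<close>-jets.\<close>

lemma cylinder_Dk_minor_orders:
  assumes "\<And>m. m \<in> {1..k} \<Longrightarrow> e m \<le> enat n"
  shows "cylinder_Dk r s k {A \<in> Dk_arcs r s k. minor_orders r s k e A}"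
proof -
  define C where "C = Dk_jets r s k n \<inter> (jets r s n \<inter> (\<Inter>m\<in>{1..k}.
    {x \<in> jets r s n. jet_minors_dvd r s n x m (e m)} - {x \<in> jets r s n. jet_minors_dvd r s n x m (e m + 1)}))"
  have "locally_closed_in (jets r s n) C"
    unfolding C_def
    by (intro locally_closed_in_Int locally_closed_in_closed zariski_closed_in_Dk_jets
        locally_closed_in_Inter locally_closed_in_Diff zariski_closed_in_jet_minors_dvd) auto
  then have "constructible_in (jets r s n) C"
    unfolding constructible_in_def by (intro exI[of _ "{C}"]) auto
  moreover have "C \<subseteq> Dk_jets r s k n" unfolding C_def by auto
  moreover have "trunc n A \<in> C \<longleftrightarrow> minor_orders r s k e A" if "A \<in> Dk_arcs r s k" for A
  proof -
    have "e m \<le> enat (Suc n)" "e m + 1 \<le> enat (Suc n)" if "m \<in> {1..k}" for m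
      using assms[OF that] by (cases "e m"; simp add: one_enat_def)+
    moreover have "A \<in> mats r s" using that unfolding Dk_arcs_def by auto
    ultimately show ?thesis
      unfolding C_def minor_orders_def
      using trunc_Dk_jets[OF that] trunc_jets jet_minors_dvd_trunc by auto
  qed
  then have "{A \<in> Dk_arcs r s k. minor_orders r s k e A} = {A \<in> Dk_arcs r s k. trunc n A \<in> C}"
    by blast
  ultimately show ?thesis unfolding cylinder_Dk_def by blast
qed

context
  fixes r s k :: nat and lam :: "nat \<Rightarrow> enat"
  assumes rs: "r \<le> s" and pp: "pre_partition r lam" and kr: "k \<le> r"
    and card_infinite: "card {i. i < r \<and> lam i = \<infinity>} = r - k"
begin

lemma infinite_part_iff: assumes "i < r" shows "lam i = \<infinity> \<longleftrightarrow> i < r - k"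
proof -
  let ?I = "{i. i < r \<and> lam i = \<infinity>}"
  have "?I = {..<card ?I}"
  proof (rule downward_closed_eq_lessThan_card)
    fix i' j assume "i' \<le> j" "j \<in> ?I"
    then show "i' \<in> ?I" using pp unfolding pre_partition_def
      by (metis (mono_tags, lifting) enat_ord_simps(5) le_less_trans mem_Collect_eq)
  qed auto
  then show ?thesis using assms card_infinite by auto
qed

lemma smallest_parts_sum_finite: "m \<le> k \<Longrightarrow> smallest_parts_sum lam r m \<noteq> \<infinity>"
proof (induction m)
  case (Suc m)
  have "lam (r - Suc m) \<noteq> \<infinity>" using infinite_part_iff[of "r - Suc m"] Suc.prems kr by auto
  moreover have "smallest_parts_sum lam r m \<noteq> \<infinity>" using Suc by simp
  ultimately show ?case using smallest_parts_sum_Suc[of m r lam] Suc.prems kr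
    by (cases "lam (r - Suc m)"; cases "smallest_parts_sum lam r m") auto
qed simp

lemma smallest_parts_sum_Suc_infinite:
  assumes "k < r" shows "smallest_parts_sum lam r (Suc k) = \<infinity>"
proof -
  have "lam (r - Suc k) = \<infinity>" using infinite_part_iff[of "r - Suc k"] assms by auto
  then show ?thesis using smallest_parts_sum_Suc[of k r lam] assms by simp
qed

lemma minor_orders_delta_iff:
  assumes "pre_partition r nu"
  shows "minor_orders r s k (smallest_parts_sum lam r) (delta r s nu)
    \<longleftrightarrow> (\<forall>m\<le>k. smallest_parts_sum nu r m = smallest_parts_sum lam r m)"
proof -
  have exact: "minors_dvd r s (delta r s nu) m (smallest_parts_sum lam r m)
      \<and> \<not> minors_dvd r s (delta r s nu) m (smallest_parts_sum lam r m + 1)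
      \<longleftrightarrow> smallest_parts_sum nu r m = smallest_parts_sum lam r m" if "m \<le> k" for m
    using minors_dvd_delta_iff[OF rs assms, of m] that kr
      enat_le_not_Suc_le_iff[OF smallest_parts_sum_finite[OF that]] by simp
  show ?thesis unfolding minor_orders_def
  proof (intro iffI allI impI ballI)
    fix m assume "\<forall>m\<in>{1..k}. minors_dvd r s (delta r s nu) m (smallest_parts_sum lam r m)
      \<and> \<not> minors_dvd r s (delta r s nu) m (smallest_parts_sum lam r m + 1)" "m \<le> k"
    then show "smallest_parts_sum nu r m = smallest_parts_sum lam r m"
      using exact by (cases "m = 0") auto
  qed (use exact in auto)
qed

text \<open>The smallest-parts sums up to \<open>k\<close> determine the last \<open>k\<close> parts by differences, and
  membership in \<open>D\<^sub>k\<close> forces the first \<open>r - k\<close> parts to be infinite.\<close>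

lemma part_eq_if_smallest_parts_sums_eq:
  assumes nu: "pre_partition r nu" and sums: "\<forall>m\<le>k. smallest_parts_sum nu r m = smallest_parts_sum lam r m"
    and Dk: "k < r \<Longrightarrow> smallest_parts_sum nu r (Suc k) = \<infinity>"
    and i: "i < r"
  shows "nu i = lam i"
proof (cases "i < r - k")
  case False
  define m where "m = r - Suc i"
  have m: "Suc m \<le> k" "i = r - Suc m" using False i unfolding m_def by auto
  have "nu (r - Suc m) + smallest_parts_sum lam r m = lam (r - Suc m) + smallest_parts_sum lam r m"
    using sums[rule_format, of "Suc m"] sums[rule_format, of m] m kr
      smallest_parts_sum_Suc[of m r nu] smallest_parts_sum_Suc[of m r lam] by simp
  then show ?thesis using m smallest_parts_sum_finite[of m]
    by (simp add: add.commute[of _ "smallest_parts_sum lam r m"] enat_add_left_cancel)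
next
  case True
  then have "k < r" by simp
  then have "nu (r - Suc k) + smallest_parts_sum lam r k = \<infinity>"
    using Dk sums smallest_parts_sum_Suc[of k r nu] by simp
  then have "nu (r - Suc k) = \<infinity>" using smallest_parts_sum_finite[of k]
    by (cases "nu (r - Suc k)"; cases "smallest_parts_sum lam r k") auto
  moreover have "nu (r - Suc k) \<le> nu i" using nu True i unfolding pre_partition_def by simp
  ultimately show ?thesis using infinite_part_iff[OF i] True by simp
qed

theorem orbit_iff_Dk_arcs_minor_orders:
  assumes A: "A \<in> mats r s"
  shows "A \<in> orbit r s lam \<longleftrightarrow> A \<in> Dk_arcs r s k \<and> minor_orders r s k (smallest_parts_sum lam r) A"
proof -
  have invariant:
    "minor_orders r s k (smallest_parts_sum lam r) A \<longleftrightarrow> minor_orders r s k (smallest_parts_sum lam r) B"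
    "A \<in> Dk_arcs r s k \<longleftrightarrow> B \<in> Dk_arcs r s k" if "arc_equiv r s A B" "B \<in> mats r s" for B
    using minors_dvd_arc_equiv[OF that] that A
    by (simp_all add: minor_orders_def Dk_arcs_iff_minors_dvd)
  have "delta r s lam \<in> Dk_arcs r s k"
  proof (cases "k < r")
    case True
    then show ?thesis using minors_dvd_delta_iff[OF rs pp, of "Suc k"] smallest_parts_sum_Suc_infinite
      by (simp add: Dk_arcs_iff_minors_dvd delta_mats[OF rs])
  qed (use kr Dk_arcs_self delta_mats[OF rs] in auto)
  moreover have "minor_orders r s k (smallest_parts_sum lam r) (delta r s lam)"
    using minor_orders_delta_iff[OF pp] by simp
  ultimately have "A \<in> Dk_arcs r s k \<and> minor_orders r s k (smallest_parts_sum lam r) A" if "A \<in> orbit r s lam"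
    using that invariant delta_mats[OF rs] unfolding orbit_eq_arc_equiv by blast
  moreover have "A \<in> orbit r s lam" if "A \<in> Dk_arcs r s k" "minor_orders r s k (smallest_parts_sum lam r) A"
  proof -
    obtain nu where nu: "pre_partition r nu" "arc_equiv r s A (delta r s nu)"
      using smith_normal_form[OF rs A] by blast
    have "minor_orders r s k (smallest_parts_sum lam r) (delta r s nu)" "delta r s nu \<in> Dk_arcs r s k"
      using invariant[OF nu(2) delta_mats[OF rs]] that by simp_all
    then have sums: "\<forall>m\<le>k. smallest_parts_sum nu r m = smallest_parts_sum lam r m"
      and "k < r \<Longrightarrow> smallest_parts_sum nu r (Suc k) = \<infinity>"
      using minor_orders_delta_iff[OF nu(1)] minors_dvd_delta_iff[OF rs nu(1), of "Suc k" \<infinity>]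
      by (simp_all add: Dk_arcs_iff_minors_dvd delta_mats[OF rs])
    then have "delta r s nu = delta r s lam"
      using part_eq_if_smallest_parts_sums_eq[OF nu(1)] unfolding delta_def by (intro ext) auto
    then show ?thesis using nu(2) unfolding orbit_eq_arc_equiv by simp
  qed
  ultimately show ?thesis by blast
qed

lemma cylinder_Dk_orbit: "cylinder_Dk r s k (orbit r s lam)"
proof -
  define n where "n = the_enat (smallest_parts_sum lam r k)"
  have "smallest_parts_sum lam r m \<le> enat n" if "m \<in> {1..k}" for m
  proof -
    have "smallest_parts_sum lam r m \<le> smallest_parts_sum lam r k"
      unfolding smallest_parts_sum_def using that by (intro sum_mono2) auto
    then show ?thesis unfolding n_def using smallest_parts_sum_finite[of k] by auto
  qed
  then have "cylinder_Dk r s k {A \<in> Dk_arcs r s k. minor_orders r s k (smallest_parts_sum lam r) A}"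
    by (rule cylinder_Dk_minor_orders)
  moreover have "orbit r s lam = {A \<in> Dk_arcs r s k. minor_orders r s k (smallest_parts_sum lam r) A}"
  proof -
    have "orbit r s lam \<subseteq> mats r s" "Dk_arcs r s k \<subseteq> mats r s"
      unfolding orbit_eq_arc_equiv Dk_arcs_def using arc_equiv_mats delta_mats[OF rs] by blast+
    then show ?thesis using orbit_iff_Dk_arcs_minor_orders by blast
  qed
  ultimately show ?thesis by simp
qed

end

theorem proposition3p4:
  fixes r s k :: nat and lam :: "nat \<Rightarrow> enat"
  assumes "r \<le> s"
    and "pre_partition r lam"
  shows "(is_partition r lam \<longrightarrow> cylinder_M r s (orbit r s lam))
       \<and> ((k \<le> r \<and> card {i. i < r \<and> lam i = \<infinity>} = r - k) \<longrightarrow> cylinder_Dk r s k (orbit r s lam))"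
proof (intro conjI impI)
  assume "is_partition r lam"
  then have "card {i. i < r \<and> lam i = \<infinity>} = r - r" unfolding is_partition_def by simp
  then have "cylinder_Dk r s r (orbit r s lam)" using cylinder_Dk_orbit assms by blast
  then show "cylinder_M r s (orbit r s lam)" unfolding cylinder_Dk_def cylinder_M_def Dk_arcs_self by blast
next
  assume "k \<le> r \<and> card {i. i < r \<and> lam i = \<infinity>} = r - k"
  then show "cylinder_Dk r s k (orbit r s lam)" using cylinder_Dk_orbit assms by blast
qed

end
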